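(* Let $M$ be a smooth manifold of dimension $n\geq2$, $\Gamma$ a symmetric extended affine connection, $V$ a regular extended vector field and $Q$ an extended covector field on $M$. Let $T^k_{ij}(x,p)=T^k_{ji}(x,p)$ be the components of a smooth symmetric extended tensor field of type $(1,2)$, and set $\Gamma'^k_{ij}=\Gamma^k_{ij}+T^k_{ij}$, $Q'_i=Q_i-\sum_{k,s}T^k_{is}p_kV^s$. Then $(V,Q)$ satisfies the additional normality equations $$\sum_{r,s}(A^{rs}-A^{sr})P^i_rP^j_s=0,\quad \sum_{r,s}(C_{rs}-C_{sr})P^r_iP^s_j=0,\quad \sum_{r,s}P^i_rB^r_sP^s_j=\frac{1}{n-1}\Big(\sum_{r,s}B^r_sP^s_r\Big)P^i_j$$ computed with respect to $\Gamma$ at all points of $T^*M$ with $p\neq0$ if and only if $(V,Q')$ satisfies these equations computed with respect to $\Gamma'$ at all such points.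
   Context: Local coordinates $x^i$ on $M$ induce $(x,p)$ on $T^*M$; with $S^i_j=\partial x^i/\partial\tilde x^j$, $T^i_j=\partial\tilde x^i/\partial x^j$, $\tilde p_j=\sum_iS^i_jp_i$, a symmetric extended affine connection is given by smooth $\Gamma^k_{ij}(x,p)=\Gamma^k_{ji}(x,p)$ with $\Gamma^k_{ij}=\sum S^k_mT^a_iT^c_j\tilde\Gamma^m_{ac}+\sum_mS^k_m\partial T^m_i/\partial x^j$; extended tensor fields have components that are smooth functions of $(x,p)$ transforming tensorially. All sums run from $1$ to $n$. For a given connection: $\tilde\nabla^mX=\partial X/\partial p_m$ componentwise; $\nabla_mX^{i_1\dots i_r}_{j_1\dots j_s}=\frac{\partial X^{\dots}_{\dots}}{\partial x^m}+\sum_{b,c}p_c\Gamma^c_{mb}\frac{\partial X^{\dots}_{\dots}}{\partial p_b}+\sum_{k=1}^r\sum_a\Gamma^{i_k}_{ma}X^{i_1\dots a\dots i_r}_{j_1\dots j_s}-\sum_{k=1}^s\sum_b\Gamma^b_{mj_k}X^{i_1\dots i_r}_{j_1\dots b\dots j_s}$; $R^k_{rij}=\frac{\partial\Gamma^k_{jr}}{\partial x^i}-\frac{\partial\Gamma^k_{ir}}{\partial x^j}+\sum_m\Gamma^k_{im}\Gamma^m_{jr}-\sum_m\Gamma^k_{jm}\Gamma^m_{ir}+\sum_{m,\alpha}p_\alpha\Gamma^\alpha_{mi}\frac{\partial\Gamma^k_{jr}}{\partial p_m}-\sum_{m,\alpha}p_\alpha\Gamma^\alpha_{mj}\frac{\partial\Gamma^k_{ir}}{\partial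 p_m}$; $D^{kr}_{ij}=-\partial\Gamma^k_{ij}/\partial p_r$. Regularity of $V$: $(x,p)\mapsto(x,V(x,p))$ is a diffeomorphism $T^*M\to TM$; $V=0$ iff $p=0$; with $W^s=\sum_r(\partial V^r/\partial p_s)p_r$, $\Omega=\sum_sp_sW^s\neq0$ for $p\neq0$. Data (for a given connection and covector field $Q$): $P^i_j=\delta^i_j-W^ip_j/\Omega$; $U_s=\sum_r\nabla_sV^rp_r+Q_s$; $A^{rs}=\tilde\nabla^rW^s$; $B^r_s=\tilde\nabla^rU_s+\sum_{m,k}W^kp_mD^{mr}_{ks}-\nabla_sW^r+\sum_m\frac{\tilde\nabla^mW^r-\tilde\nabla^rW^m}{\Omega}U_sp_m$; $C_{rs}=\nabla_rU_s-\sum_m\frac{U_r\tilde\nabla^mU_s+U_s\nabla_rW^m}{\Omega}p_m-\sum_{k,q}\Big(\sum_m\frac{D^{mq}_{ks}U_r}{\Omega}p_m+\frac{R^q_{krs}}{2}\Big)W^kp_q$. *)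

theory Defs
  imports "HOL-Analysis.Analysis"
begin

text \<open>Single coordinate chart: M is (identified with) an open set U of R^n, the index
type 'n has n elements, and T*M over U is U x R^n with coordinates (x,p).
Extended objects are given by their component functions of (x,p).\<close>

fun iter_dd :: "'a::real_normed_vector list \<Rightarrow> ('a \<Rightarrow> 'b::real_normed_vector) \<Rightarrow> 'a \<Rightarrow> 'b" where
  "iter_dd [] f = f"
| "iter_dd (v # vs) f = (\<lambda>z. frechet_derivative (iter_dd vs f) (at z) v)"

definition smooth_on :: "'a::real_normed_vector set \<Rightarrow> ('a \<Rightarrow> 'b::real_normed_vector) \<Rightarrow> bool" where
  "smooth_on S f \<longleftrightarrow> (\<forall>vs. \<forall>z\<in>S. iter_dd vs f differentiable (at z))"

type_synonym 'n scal = "real^'n \<Rightarrow> real^'n \<Rightarrow> real"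

definition smooth_ext :: "(real^'n) set \<Rightarrow> 'n scal \<Rightarrow> bool" where
  "smooth_ext U f \<longleftrightarrow> smooth_on (U \<times> UNIV) (\<lambda>z. f (fst z) (snd z))"

definition dx :: "'n::finite \<Rightarrow> 'n scal \<Rightarrow> 'n scal" where
  "dx m f x p = frechet_derivative (\<lambda>z. f (fst z) (snd z)) (at (x, p)) (axis m 1, 0)"

definition dp :: "'n::finite \<Rightarrow> 'n scal \<Rightarrow> 'n scal" where
  "dp m f x p = frechet_derivative (\<lambda>z. f (fst z) (snd z)) (at (x, p)) (0, axis m 1)"

text \<open>Connection components: G k i j = Gamma^k_{ij}.\<close>
type_synonym 'n conn = "'n \<Rightarrow> 'n \<Rightarrow> 'n \<Rightarrow> 'n scal"

text \<open>Common horizontal part of nabla_m applied to a component function f.\<close>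
definition hor :: "'n::finite conn \<Rightarrow> 'n scal \<Rightarrow> 'n \<Rightarrow> 'n scal" where
  "hor G f m x p = dx m f x p + (\<Sum>b\<in>UNIV. \<Sum>c\<in>UNIV. p$c * G c m b x p * dp b f x p)"

definition nab_up :: "'n::finite conn \<Rightarrow> ('n \<Rightarrow> 'n scal) \<Rightarrow> 'n \<Rightarrow> 'n \<Rightarrow> 'n scal" where
  "nab_up G X i m x p = hor G (X i) m x p + (\<Sum>a\<in>UNIV. G i m a x p * X a x p)"

definition nab_down :: "'n::finite conn \<Rightarrow> ('n \<Rightarrow> 'n scal) \<Rightarrow> 'n \<Rightarrow> 'n \<Rightarrow> 'n scal" where
  "nab_down G Y j m x p = hor G (Y j) m x p - (\<Sum>b\<in>UNIV. G b m j x p * Y b x p)"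

definition curv :: "'n::finite conn \<Rightarrow> 'n \<Rightarrow> 'n \<Rightarrow> 'n \<Rightarrow> 'n \<Rightarrow> 'n scal" where
  "curv G k r i j x p =
     dx i (G k j r) x p - dx j (G k i r) x p
     + (\<Sum>m\<in>UNIV. G k i m x p * G m j r x p) - (\<Sum>m\<in>UNIV. G k j m x p * G m i r x p)
     + (\<Sum>m\<in>UNIV. \<Sum>\<alpha>\<in>UNIV. p$\<alpha> * G \<alpha> m i x p * dp m (G k j r) x p)
     - (\<Sum>m\<in>UNIV. \<Sum>\<alpha>\<in>UNIV. p$\<alpha> * G \<alpha> m j x p * dp m (G k i r) x p)"

definition Dt :: "'n::finite conn \<Rightarrow> 'n \<Rightarrow> 'n \<Rightarrow> 'n \<Rightarrow> 'n \<Rightarrow> 'n scal" where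
  "Dt G k r i j x p = - dp r (G k i j) x p"

definition Wf :: "('n::finite \<Rightarrow> 'n scal) \<Rightarrow> 'n \<Rightarrow> 'n scal" where
  "Wf V s x p = (\<Sum>r\<in>UNIV. dp s (V r) x p * p$r)"

definition Omega :: "('n::finite \<Rightarrow> 'n scal) \<Rightarrow> 'n scal" where
  "Omega V x p = (\<Sum>s\<in>UNIV. p$s * Wf V s x p)"

definition Pf :: "('n::finite \<Rightarrow> 'n scal) \<Rightarrow> 'n \<Rightarrow> 'n \<Rightarrow> 'n scal" where
  "Pf V i j x p = (if i = j then 1 else 0) - Wf V i x p * p$j / Omega V x p"

definition Uf :: "'n::finite conn \<Rightarrow> ('n \<Rightarrow> 'n scal) \<Rightarrow> ('n \<Rightarrow> 'n scal) \<Rightarrow> 'n \<Rightarrow> 'n scal" where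
  "Uf G V Q s x p = (\<Sum>r\<in>UNIV. nab_up G V r s x p * p$r) + Q s x p"

definition Af :: "('n::finite \<Rightarrow> 'n scal) \<Rightarrow> 'n \<Rightarrow> 'n \<Rightarrow> 'n scal" where
  "Af V r s x p = dp r (Wf V s) x p"

definition Bf :: "'n::finite conn \<Rightarrow> ('n \<Rightarrow> 'n scal) \<Rightarrow> ('n \<Rightarrow> 'n scal) \<Rightarrow> 'n \<Rightarrow> 'n \<Rightarrow> 'n scal" where
  "Bf G V Q r s x p =
     dp r (Uf G V Q s) x p
     + (\<Sum>m\<in>UNIV. \<Sum>k\<in>UNIV. Wf V k x p * p$m * Dt G m r k s x p)
     - nab_up G (Wf V) r s x p
     + (\<Sum>m\<in>UNIV. (dp m (Wf V r) x p - dp r (Wf V m) x p) / Omega V x p * Uf G V Q s x p * p$m)"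

definition Cf :: "'n::finite conn \<Rightarrow> ('n \<Rightarrow> 'n scal) \<Rightarrow> ('n \<Rightarrow> 'n scal) \<Rightarrow> 'n \<Rightarrow> 'n \<Rightarrow> 'n scal" where
  "Cf G V Q r s x p =
     nab_down G (Uf G V Q) s r x p
     - (\<Sum>m\<in>UNIV. (Uf G V Q r x p * dp m (Uf G V Q s) x p
                    + Uf G V Q s x p * nab_up G (Wf V) m r x p) / Omega V x p * p$m)
     - (\<Sum>k\<in>UNIV. \<Sum>q\<in>UNIV.
          ((\<Sum>m\<in>UNIV. Dt G m q k s x p * Uf G V Q r x p / Omega V x p * p$m)
           + curv G q k r s x p / 2) * Wf V k x p * p$q)"

definition normality_eqs :: "'n::finite conn \<Rightarrow> ('n \<Rightarrow> 'n scal) \<Rightarrow> ('n \<Rightarrow> 'n scal) \<Rightarrow> real^'n \<Rightarrow> real^'n \<Rightarrow> bool" where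
  "normality_eqs G V Q x p \<longleftrightarrow>
     (\<forall>i j. (\<Sum>r\<in>UNIV. \<Sum>s\<in>UNIV. (Af V r s x p - Af V s r x p) * Pf V i r x p * Pf V j s x p) = 0)
   \<and> (\<forall>i j. (\<Sum>r\<in>UNIV. \<Sum>s\<in>UNIV. (Cf G V Q r s x p - Cf G V Q s r x p) * Pf V r i x p * Pf V s j x p) = 0)
   \<and> (\<forall>i j. (\<Sum>r\<in>UNIV. \<Sum>s\<in>UNIV. Pf V i r x p * Bf G V Q r s x p * Pf V s j x p)
           = 1 / (real CARD('n) - 1) * (\<Sum>r\<in>UNIV. \<Sum>s\<in>UNIV. Bf G V Q r s x p * Pf V s r x p) * Pf V i j x p)"

definition regular_field :: "(real^'n::finite) set \<Rightarrow> ('n \<Rightarrow> 'n scal) \<Rightarrow> bool" where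
  "regular_field U V \<longleftrightarrow>
     (let \<Phi> = (\<lambda>z::(real^'n) \<times> (real^'n). (fst z, \<chi> i. V i (fst z) (snd z))) in
        bij_betw \<Phi> (U \<times> UNIV) (U \<times> UNIV)
      \<and> smooth_on (U \<times> UNIV) \<Phi>
      \<and> smooth_on (U \<times> UNIV) (inv_into (U \<times> UNIV) \<Phi>))
   \<and> (\<forall>x\<in>U. \<forall>p. (\<forall>i. V i x p = 0) \<longleftrightarrow> p = 0)
   \<and> (\<forall>x\<in>U. \<forall>p. p \<noteq> 0 \<longrightarrow> Omega V x p \<noteq> 0)"

end

theory Submission
  imports Defs
begin

(* At a point (x, p), with E = A - A^T, the three normality equations read
   P E P^T = 0,  P^T (C - C^T) P = 0  and  P B P = l P  with  l = tr (B P) / (n - 1),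
   and A and P depend on V only. Put t_ij = p_c T^c_ij, a symmetric matrix. A computation in
   coordinates gives B' = B + E P^T t and C' - C'^T = C - C^T + t P B - (t P B)^T + t P E (t P)^T;
   here the change of the curvature of Gamma + T cancels exactly the derivatives of T that appear
   in the change of the horizontal derivative of U. If P E P^T = 0, then P annihilates the
   corrections of P B P and of tr (B P); if moreover P B P = l P, the correction of
   P^T (C - C^T) P is l (P^T t P - (P^T t P)^T) = 0.
   The equivalence thus holds at every single point. *)

section \<open>Matrix form of the normality equations\<close>

lemma transpose_diff: "transpose (A - B) = transpose A - transpose (B :: 'a::ab_group_add^'n^'m)"
  by (simp add: transpose_def vec_eq_iff)

lemma transpose_add: "transpose (A + B) = transpose A + transpose (B :: 'a::ab_group_add^'n^'m)"
  by (simp add: transpose_def vec_eq_iff)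

lemma matrix_add_rdistrib: "(A + B) ** C = A ** C + B ** (C :: 'a::semiring_1^_^_)"
  by (simp add: matrix_matrix_mult_def vec_eq_iff distrib_right sum.distrib)

lemma matrix_diff_ldistrib: "A ** (B - C) = A ** B - A ** (C :: 'a::ring_1^_^_)"
  by (simp add: matrix_matrix_mult_def vec_eq_iff right_diff_distrib sum_subtractf)

lemma matrix_diff_rdistrib: "(A - B) ** C = A ** C - B ** (C :: 'a::ring_1^_^_)"
  by (simp add: matrix_matrix_mult_def vec_eq_iff left_diff_distrib sum_subtractf)

lemmas matrix_ring_simps = matrix_add_ldistrib matrix_add_rdistrib matrix_diff_ldistrib matrix_diff_rdistrib
  matrix_mul_assoc transpose_add transpose_diff matrix_transpose_mul

definition normal_matrix_eqs :: "real^'n^'n \<Rightarrow> real^'n^'n \<Rightarrow> real^'n^'n \<Rightarrow> real^'n^'n \<Rightarrow> bool" where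
  "normal_matrix_eqs P A B C \<longleftrightarrow>
     P ** (A - transpose A) ** transpose P = 0
   \<and> transpose P ** (C - transpose C) ** P = 0
   \<and> P ** B ** P = (trace (B ** P) / (real CARD('n) - 1)) *\<^sub>R P"

lemma normal_matrix_eqs_shift:
  fixes P A B B' C C' t :: "real^'n^'n"
  defines "E \<equiv> A - transpose A"
  assumes t_sym: "transpose t = t"
    and B': "B' = B + E ** transpose P ** t"
    and C': "C' - transpose C' = C - transpose C + t ** P ** B - transpose (t ** P ** B)
                                 + t ** P ** E ** transpose (t ** P)"
  shows "normal_matrix_eqs P A B C \<longleftrightarrow> normal_matrix_eqs P A B' C'"
proof (cases "P ** E ** transpose P = 0")
  case True
  let ?c = "\<lambda>B. trace (B ** P) / (real CARD('n) - 1)"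
  have PB'P: "P ** B' ** P = P ** B ** P"
    using True by (simp add: B' matrix_ring_simps)
  have trace_B': "trace (B' ** P) = trace (B ** P)"
  proof -
    have "trace (E ** transpose P ** t ** P) = trace (P ** (E ** transpose P ** t))"
      by (rule trace_mul_sym)
    also have "\<dots> = 0"
      using True by (simp add: matrix_mul_assoc trace_def)
    finally show ?thesis by (simp add: B' matrix_add_rdistrib trace_add)
  qed
  have C'_eq: "transpose P ** (C' - transpose C') ** P = transpose P ** (C - transpose C) ** P"
    if PBP: "P ** B ** P = ?c B *\<^sub>R P"
  proof -
    have "transpose P ** (t ** P ** B) ** P = transpose P ** t ** (P ** B ** P)"
      by (simp add: matrix_mul_assoc)
    also have "\<dots> = ?c B *\<^sub>R (transpose P ** t ** P)"
      by (simp add: PBP matrix_scalar_ac scalar_matrix_assoc)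
    finally have tPB: "transpose P ** (t ** P ** B) ** P = ?c B *\<^sub>R (transpose P ** t ** P)" .
    have "transpose P ** transpose (t ** P ** B) ** P = transpose (P ** B ** P) ** t ** P"
      using t_sym by (simp add: matrix_transpose_mul matrix_mul_assoc)
    also have "\<dots> = ?c B *\<^sub>R (transpose P ** t ** P)"
      by (simp add: PBP transpose_scalar scalar_matrix_assoc)
    finally have tPB_transpose: "transpose P ** transpose (t ** P ** B) ** P = ?c B *\<^sub>R (transpose P ** t ** P)" .
    have tPEPt: "transpose P ** (t ** P ** E ** transpose (t ** P)) ** P
        = transpose P ** t ** (P ** E ** transpose P) ** t ** P"
      using t_sym by (simp add: matrix_transpose_mul matrix_mul_assoc)
    show ?thesis using tPB tPB_transpose tPEPt True by (simp add: C' matrix_ring_simps)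
  qed
  show ?thesis
    unfolding normal_matrix_eqs_def E_def[symmetric] using PB'P trace_B' C'_eq by auto
next
  case False
  then show ?thesis by (simp add: normal_matrix_eqs_def E_def)
qed

lemma matrix_triple_product_nth:
  "(X ** Y ** Z) $ i $ j = (\<Sum>r\<in>UNIV. \<Sum>s\<in>UNIV. X $ i $ r * Y $ r $ s * Z $ s $ j)"
  for X :: "'a::semiring_1^'p^'m" and Y :: "'a^'q^'p" and Z :: "'a^'r^'q"
  unfolding matrix_matrix_mult_def by (simp add: sum_distrib_right) (rule sum.swap)

lemma trace_matrix_product:
  "trace (X ** Y) = (\<Sum>r\<in>UNIV. \<Sum>s\<in>UNIV. X $ r $ s * Y $ s $ r)" for X :: "'a::semiring_1^'m^'n"
  by (simp add: trace_def matrix_matrix_mult_def)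

lemma normality_eqs_iff_normal_matrix_eqs:
  "normality_eqs G V Q x p \<longleftrightarrow>
     normal_matrix_eqs (\<chi> i j. Pf V i j x p) (\<chi> r s. Af V r s x p)
       (\<chi> r s. Bf G V Q r s x p) (\<chi> r s. Cf G V Q r s x p)"
  unfolding normality_eqs_def normal_matrix_eqs_def
  by (simp add: vec_eq_iff matrix_triple_product_nth trace_matrix_product transpose_def mult_ac)

section \<open>Derivatives of extended scalar fields\<close>

definition ext_deriv :: "(real^'n) \<times> (real^'n) \<Rightarrow> 'n scal \<Rightarrow> 'n scal" where
  "ext_deriv v f x p = frechet_derivative (\<lambda>z. f (fst z) (snd z)) (at (x, p)) v"

definition ext_differentiable :: "'n scal \<Rightarrow> real^'n \<Rightarrow> real^'n \<Rightarrow> bool" where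
  "ext_differentiable f x p \<longleftrightarrow> (\<lambda>z. f (fst z) (snd z)) differentiable at (x, p)"

lemma dx_eq_ext_deriv: "dx m f = ext_deriv (axis m 1, 0) f"
  by (simp add: fun_eq_iff dx_def ext_deriv_def)

lemma dp_eq_ext_deriv: "dp m f = ext_deriv (0, axis m 1) f"
  by (simp add: fun_eq_iff dp_def ext_deriv_def)

lemma ext_deriv_has_derivative:
  assumes "((\<lambda>z. f (fst z) (snd z)) has_derivative f') (at (x, p))"
  shows "ext_deriv v f x p = f' v"
  using frechet_derivative_at[OF assms] by (simp add: ext_deriv_def)

lemma has_derivative_ext_deriv:
  assumes "ext_differentiable f x p"
  shows "((\<lambda>z. f (fst z) (snd z)) has_derivative (\<lambda>v. ext_deriv v f x p)) (at (x, p))"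
  using assms by (simp add: ext_differentiable_def ext_deriv_def frechet_derivative_works)

lemma ext_deriv_add:
  assumes "ext_differentiable f x p" "ext_differentiable g x p"
  shows "ext_deriv v (\<lambda>x p. f x p + g x p) x p = ext_deriv v f x p + ext_deriv v g x p"
  using assms by (intro ext_deriv_has_derivative has_derivative_add has_derivative_ext_deriv)

lemma ext_deriv_mult:
  assumes "ext_differentiable f x p" "ext_differentiable g x p"
  shows "ext_deriv v (\<lambda>x p. f x p * g x p) x p = f x p * ext_deriv v g x p + ext_deriv v f x p * g x p"
  using has_derivative_mult[OF has_derivative_ext_deriv[OF assms(1)] has_derivative_ext_deriv[OF assms(2)]]
  by (rule ext_deriv_has_derivative[THEN trans]) simp

lemma ext_deriv_sum:
  assumes "\<And>i. i \<in> S \<Longrightarrow> ext_differentiable (f i) x p"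
  shows "ext_deriv v (\<lambda>x p. \<Sum>i\<in>S. f i x p) x p = (\<Sum>i\<in>S. ext_deriv v (f i) x p)"
  using assms by (intro ext_deriv_has_derivative has_derivative_sum has_derivative_ext_deriv)

lemma has_derivative_coordinate:
  "((\<lambda>z::(real^'n) \<times> (real^'n). snd z $ c) has_derivative (\<lambda>v. snd v $ c)) (at z)"
  by (intro bounded_linear.has_derivative[OF bounded_linear_vec_nth] has_derivative_snd has_derivative_ident)

lemma ext_deriv_coordinate: "ext_deriv v (\<lambda>x p. p $ c) x p = snd v $ c"
  using has_derivative_coordinate by (rule ext_deriv_has_derivative)

lemma sum_axis_mult: "(\<Sum>c\<in>UNIV. axis r (1::real) $ c * f c) = f r"
proof -
  have "axis r 1 $ c * f c = (if c = r then f c else 0)" for c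
    by (simp add: axis_def)
  then show ?thesis by simp
qed

lemma ext_differentiable_add:
  "ext_differentiable f x p \<Longrightarrow> ext_differentiable g x p \<Longrightarrow> ext_differentiable (\<lambda>x p. f x p + g x p) x p"
  unfolding ext_differentiable_def by (rule differentiable_add)

lemma ext_differentiable_mult:
  "ext_differentiable f x p \<Longrightarrow> ext_differentiable g x p \<Longrightarrow> ext_differentiable (\<lambda>x p. f x p * g x p) x p"
  unfolding ext_differentiable_def by (rule differentiable_mult)

lemma ext_differentiable_sum:
  "finite S \<Longrightarrow> (\<And>i. i \<in> S \<Longrightarrow> ext_differentiable (f i) x p)
    \<Longrightarrow> ext_differentiable (\<lambda>x p. \<Sum>i\<in>S. f i x p) x p"
  unfolding ext_differentiable_def by (auto intro: differentiable_sum)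

lemma ext_differentiable_coordinate: "ext_differentiable (\<lambda>x p. p $ c) x p"
  unfolding ext_differentiable_def differentiable_def using has_derivative_coordinate by blast

lemma smooth_ext_differentiable:
  assumes "smooth_ext U f" "x \<in> U"
  shows "ext_differentiable f x p" "ext_differentiable (ext_deriv v f) x p"
proof -
  have "iter_dd vs (\<lambda>z. f (fst z) (snd z)) differentiable at (x, p)" for vs
    using assms unfolding smooth_ext_def smooth_on_def by blast
  from this[of "[]"] this[of "[v]"] show "ext_differentiable f x p" "ext_differentiable (ext_deriv v f) x p"
    by (simp_all add: ext_differentiable_def ext_deriv_def)
qed

lemmas sum_simps = sum.distrib sum_subtractf sum_distrib_left sum_distrib_right sum_negf

lemma sum_rotate3:
  "(\<Sum>a\<in>A. \<Sum>b\<in>B. \<Sum>c\<in>C. f a b c) = (\<Sum>b\<in>B. \<Sum>c\<in>C. \<Sum>a\<in>A. f a b c)"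
proof -
  have "(\<Sum>a\<in>A. \<Sum>b\<in>B. \<Sum>c\<in>C. f a b c) = (\<Sum>b\<in>B. \<Sum>a\<in>A. \<Sum>c\<in>C. f a b c)"
    by (rule sum.swap)
  also have "\<dots> = (\<Sum>b\<in>B. \<Sum>c\<in>C. \<Sum>a\<in>A. f a b c)"
    by (rule sum.cong[OF refl], rule sum.swap)
  finally show ?thesis .
qed

lemma sum_mult_sum_swap:
  "(\<Sum>q\<in>A. a q * (\<Sum>m\<in>B. f q m)) = (\<Sum>m\<in>B. \<Sum>q\<in>A. a q * f q m :: 'a::semiring_0)"
  by (simp add: sum_distrib_left) (rule sum.swap)

lemma quadratic_form_antisym: "(\<Sum>i\<in>UNIV. \<Sum>j\<in>UNIV. v i * v j * (M i j - M j i)) = (0::real)"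
proof -
  have "(\<Sum>i\<in>UNIV. \<Sum>j\<in>UNIV. v i * v j * M j i) = (\<Sum>i\<in>UNIV. \<Sum>j\<in>UNIV. v i * v j * M i j)"
    by (subst sum.swap) (simp add: mult.commute)
  then show ?thesis by (simp add: right_diff_distrib sum_subtractf)
qed

lemma bilinear_form_diff:
  "(\<Sum>b\<in>UNIV. \<Sum>k\<in>UNIV. (u b - \<alpha> * w b) * M b k * (v k - \<beta> * w k))
     = (\<Sum>b\<in>UNIV. \<Sum>k\<in>UNIV. u b * M b k * v k)
       - \<beta> * (\<Sum>b\<in>UNIV. \<Sum>k\<in>UNIV. u b * M b k * w k)
       - \<alpha> * (\<Sum>b\<in>UNIV. \<Sum>k\<in>UNIV. w b * M b k * v k)
       + \<alpha> * \<beta> * (\<Sum>b\<in>UNIV. \<Sum>k\<in>UNIV. w b * M b k * w k :: real)"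
  by (simp add: algebra_simps sum.distrib sum_subtractf sum_distrib_left)

definition p_contract :: "'n::finite conn \<Rightarrow> 'n \<Rightarrow> 'n \<Rightarrow> 'n scal" where
  "p_contract T i j x p = (\<Sum>c\<in>UNIV. p$c * T c i j x p)"

lemma p_contract_sym: "(\<And>k i j. T k i j = T k j i) \<Longrightarrow> p_contract T i j = p_contract T j i"
  by (simp add: fun_eq_iff p_contract_def)

lemma hor_eq: "hor G f m x p = dx m f x p + (\<Sum>b\<in>UNIV. p_contract G m b x p * dp b f x p)"
  unfolding hor_def p_contract_def sum_distrib_right by (simp add: mult_ac)

lemma ext_deriv_p_contract:
  assumes "\<And>c. ext_differentiable (T c i j) x p"
  shows "ext_deriv v (p_contract T i j) x p
    = (\<Sum>c\<in>UNIV. snd v $ c * T c i j x p) + p_contract (\<lambda>c i j. ext_deriv v (T c i j)) i j x p"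
proof -
  have "p_contract T i j = (\<lambda>x p. \<Sum>c\<in>UNIV. p $ c * T c i j x p)"
    by (simp add: fun_eq_iff p_contract_def)
  then show ?thesis
    using assms by (simp add: ext_deriv_sum ext_deriv_mult ext_deriv_coordinate p_contract_def sum.distrib
        ext_differentiable_mult ext_differentiable_coordinate algebra_simps)
qed

lemma ext_differentiable_p_contract:
  "(\<And>c. ext_differentiable (T c i j) x p) \<Longrightarrow> ext_differentiable (p_contract T i j) x p"
  unfolding p_contract_def
  by (intro ext_differentiable_sum ext_differentiable_mult ext_differentiable_coordinate) auto

lemma dp_p_contract:
  assumes "\<And>c. ext_differentiable (T c i j) x p"
  shows "dp b (p_contract T i j) x p = T b i j x p + p_contract (\<lambda>c i j. dp b (T c i j)) i j x p"
  using ext_deriv_p_contract[of T i j x p "(0, axis b 1)", OF assms]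
  by (simp add: dp_eq_ext_deriv sum_axis_mult)

lemma dx_p_contract:
  assumes "\<And>c. ext_differentiable (T c i j) x p"
  shows "dx r (p_contract T i j) x p = p_contract (\<lambda>c i j. dx r (T c i j)) i j x p"
  using ext_deriv_p_contract[of T i j x p "(axis r 1, 0)", OF assms]
  by (simp add: dx_eq_ext_deriv)

definition curv_Wp :: "'n::finite conn \<Rightarrow> ('n \<Rightarrow> 'n scal) \<Rightarrow> 'n \<Rightarrow> 'n \<Rightarrow> 'n scal" where
  "curv_Wp G V r s x p = (\<Sum>k\<in>UNIV. \<Sum>q\<in>UNIV. curv G q k r s x p * Wf V k x p * p$q)"

lemma curv_Wp_antisym: "curv_Wp G V s r x p = - curv_Wp G V r s x p"
  by (simp add: curv_Wp_def curv_def sum_negf[symmetric] algebra_simps)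

lemma sum_p_Bf:
  "(\<Sum>m\<in>UNIV. p$m * Bf G V Q m s x p)
     = (\<Sum>m\<in>UNIV. p$m * dp m (Uf G V Q s) x p)
       + (\<Sum>k\<in>UNIV. \<Sum>q\<in>UNIV. \<Sum>m\<in>UNIV. Dt G m q k s x p * p$m * Wf V k x p * p$q)
       - (\<Sum>m\<in>UNIV. p$m * nab_up G (Wf V) m s x p)"
proof -
  have "(\<Sum>m\<in>UNIV. p$m * (\<Sum>m'\<in>UNIV. (Af V m' m x p - Af V m m' x p) / Omega V x p * Uf G V Q s x p * p$m'))
      = Uf G V Q s x p / Omega V x p * (\<Sum>m\<in>UNIV. \<Sum>m'\<in>UNIV. p$m * p$m' * (Af V m' m x p - Af V m m' x p))"
    (is "?antisym = _")
    by (simp add: sum_distrib_left mult_ac)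
  also have "\<dots> = 0"
    using quadratic_form_antisym[of "\<lambda>i. p$i" "\<lambda>i j. Af V j i x p"] by simp
  finally have antisym: "?antisym = 0" .
  have "(\<Sum>m\<in>UNIV. p$m * (\<Sum>m'\<in>UNIV. \<Sum>k\<in>UNIV. Wf V k x p * p$m' * Dt G m' m k s x p))
      = (\<Sum>m\<in>UNIV. \<Sum>m'\<in>UNIV. \<Sum>k\<in>UNIV. Dt G m' m k s x p * p$m' * Wf V k x p * p$m)"
    by (simp add: sum_distrib_left mult_ac)
  also have "\<dots> = (\<Sum>k\<in>UNIV. \<Sum>q\<in>UNIV. \<Sum>m\<in>UNIV. Dt G m q k s x p * p$m * Wf V k x p * p$q)"
    by (subst sum_rotate3[symmetric]) (rule refl)
  finally show ?thesis
    using antisym unfolding Bf_def Af_def by (simp add: sum_simps algebra_simps)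
qed

lemma Cf_eq:
  "Cf G V Q r s x p
     = nab_down G (Uf G V Q) s r x p
       - (Uf G V Q r x p * ((\<Sum>m\<in>UNIV. p$m * Bf G V Q m s x p) + (\<Sum>m\<in>UNIV. p$m * nab_up G (Wf V) m s x p))
          + Uf G V Q s x p * (\<Sum>m\<in>UNIV. p$m * nab_up G (Wf V) m r x p)) / Omega V x p
       - curv_Wp G V r s x p / 2"
  unfolding Cf_def sum_p_Bf curv_Wp_def
  by (simp add: sum_simps algebra_simps add_divide_distrib diff_divide_distrib sum_divide_distrib)

lemma Cf_antisym:
  "Cf G V Q r s x p - Cf G V Q s r x p
     = nab_down G (Uf G V Q) s r x p - nab_down G (Uf G V Q) r s x p
       - (Uf G V Q r x p * (\<Sum>m\<in>UNIV. p$m * Bf G V Q m s x p)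
          - Uf G V Q s x p * (\<Sum>m\<in>UNIV. p$m * Bf G V Q m r x p)) / Omega V x p
       - curv_Wp G V r s x p"
  unfolding Cf_eq[of G V Q r s] Cf_eq[of G V Q s r] curv_Wp_antisym[of G V s r]
  by (simp add: algebra_simps diff_divide_distrib add_divide_distrib)

section \<open>Shifting the connection by T\<close>

definition conn_shift :: "'n conn \<Rightarrow> 'n conn \<Rightarrow> 'n conn" where
  "conn_shift G T = (\<lambda>k i j x p. G k i j x p + T k i j x p)"

definition covector_shift :: "'n::finite conn \<Rightarrow> ('n \<Rightarrow> 'n scal) \<Rightarrow> ('n \<Rightarrow> 'n scal) \<Rightarrow> 'n \<Rightarrow> 'n scal" where
  "covector_shift T V Q = (\<lambda>i x p. Q i x p - (\<Sum>k\<in>UNIV. \<Sum>s\<in>UNIV. T k i s x p * p$k * V s x p))"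

lemma p_contract_conn_shift:
  "p_contract (conn_shift G T) i j x p = p_contract G i j x p + p_contract T i j x p"
  by (simp add: p_contract_def conn_shift_def sum.distrib distrib_left)

lemma Uf_shift:
  "Uf (conn_shift G T) V (covector_shift T V Q) s x p
     = Uf G V Q s x p + (\<Sum>b\<in>UNIV. p_contract T s b x p * Wf V b x p)"
proof -
  have "(\<Sum>r\<in>UNIV. (\<Sum>b\<in>UNIV. \<Sum>c\<in>UNIV. p$c * T c s b x p * dp b (V r) x p) * p$r)
      = (\<Sum>r\<in>UNIV. \<Sum>b\<in>UNIV. \<Sum>c\<in>UNIV. p$c * T c s b x p * dp b (V r) x p * p$r)"
    by (simp add: sum_distrib_right)
  also have "\<dots> = (\<Sum>b\<in>UNIV. \<Sum>c\<in>UNIV. \<Sum>r\<in>UNIV. p$c * T c s b x p * dp b (V r) x p * p$r)"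
    by (rule sum_rotate3)
  also have "\<dots> = (\<Sum>b\<in>UNIV. p_contract T s b x p * Wf V b x p)"
    by (simp add: p_contract_def Wf_def sum_distrib_left sum_distrib_right mult_ac)
  finally show ?thesis
    unfolding Uf_def nab_up_def hor_def conn_shift_def covector_shift_def
    by (simp add: sum_simps algebra_simps)
qed

lemma nab_up_Wf_shift:
  "nab_up (conn_shift G T) (Wf V) r s x p
     = nab_up G (Wf V) r s x p + (\<Sum>b\<in>UNIV. p_contract T s b x p * Af V b r x p)
       + (\<Sum>a\<in>UNIV. T r s a x p * Wf V a x p)"
  unfolding nab_up_def hor_def conn_shift_def p_contract_def Af_def
  by (simp add: sum_simps algebra_simps)

definition curv_shift_term :: "'n::finite conn \<Rightarrow> 'n conn \<Rightarrow> 'n \<Rightarrow> 'n \<Rightarrow> 'n \<Rightarrow> 'n \<Rightarrow> 'n scal" where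
  "curv_shift_term G T q k r s x p =
     dx r (T q s k) x p
     + (\<Sum>m\<in>UNIV. G q r m x p * T m s k x p + T q r m x p * conn_shift G T m s k x p
          + p_contract G m r x p * dp m (T q s k) x p + p_contract T m r x p * dp m (conn_shift G T q s k) x p)"

definition curv_shift_Wp :: "'n::finite conn \<Rightarrow> 'n conn \<Rightarrow> ('n \<Rightarrow> 'n scal) \<Rightarrow> 'n \<Rightarrow> 'n \<Rightarrow> 'n scal" where
  "curv_shift_Wp G T V r s x p =
     (\<Sum>k\<in>UNIV. Wf V k x p * (hor G (p_contract T s k) r x p
        + (\<Sum>b\<in>UNIV. p_contract T r b x p * dp b (p_contract (conn_shift G T) s k) x p)))"

lemma sum_p_contract_Pf:
  "(\<Sum>c\<in>UNIV. p_contract T r c x p * Pf V c b x p)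
     = p_contract T r b x p - (\<Sum>c\<in>UNIV. p_contract T r c x p * Wf V c x p) / Omega V x p * p$b"
proof -
  have "p_contract T r c x p * Pf V c b x p
      = (if c = b then p_contract T r b x p else 0) - p_contract T r c x p * Wf V c x p * p$b / Omega V x p" for c
    by (simp add: Pf_def algebra_simps)
  then show ?thesis
    by (simp add: sum_subtractf sum_divide_distrib[symmetric] sum_distrib_right[symmetric])
qed

lemma Af_skew_form_p_contract_Pf:
  fixes T :: "'n::finite conn" and V :: "'n \<Rightarrow> 'n scal" and x p :: "real^'n"
  defines "\<Omega> \<equiv> Omega V x p" and "\<tau> \<equiv> \<lambda>r. \<Sum>b\<in>UNIV. p_contract T r b x p * Wf V b x p"
    and "E \<equiv> \<lambda>b k. Af V b k x p - Af V k b x p"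
    and "\<zeta> \<equiv> \<lambda>r. \<Sum>b\<in>UNIV. p_contract T r b x p * (\<Sum>m\<in>UNIV. p$m * (Af V m b x p - Af V b m x p))"
  shows "(\<Sum>b\<in>UNIV. \<Sum>k\<in>UNIV. (\<Sum>c\<in>UNIV. p_contract T r c x p * Pf V c b x p) * E b k
                               * (\<Sum>c\<in>UNIV. p_contract T s c x p * Pf V c k x p))
    = (\<Sum>b\<in>UNIV. \<Sum>k\<in>UNIV. p_contract T r b x p * p_contract T s k x p * E b k)
      + \<tau> s * \<zeta> r / \<Omega> - \<tau> r * \<zeta> s / \<Omega>"
proof -
  let ?t = "\<lambda>i j. p_contract T i j x p"
  have tEp: "(\<Sum>b\<in>UNIV. \<Sum>k\<in>UNIV. ?t r b * E b k * p$k) = - \<zeta> r"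
    by (simp add: \<zeta>_def E_def sum_distrib_left sum_subtractf algebra_simps)
  have pEt: "(\<Sum>b\<in>UNIV. \<Sum>k\<in>UNIV. p$b * E b k * ?t s k) = \<zeta> s"
    by (subst sum.swap) (simp add: \<zeta>_def E_def sum_distrib_left mult_ac)
  have pEp: "(\<Sum>b\<in>UNIV. \<Sum>k\<in>UNIV. p$b * E b k * p$k) = 0"
    using quadratic_form_antisym[of "\<lambda>i. p$i" "\<lambda>i j. Af V i j x p"] by (simp add: E_def mult_ac)
  have "(\<Sum>b\<in>UNIV. \<Sum>k\<in>UNIV. (\<Sum>c\<in>UNIV. ?t r c * Pf V c b x p) * E b k * (\<Sum>c\<in>UNIV. ?t s c * Pf V c k x p))
      = (\<Sum>b\<in>UNIV. \<Sum>k\<in>UNIV. (?t r b - \<tau> r / \<Omega> * p$b) * E b k * (?t s k - \<tau> s / \<Omega> * p$k))"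
    by (simp only: \<tau>_def \<Omega>_def sum_p_contract_Pf)
  also have "\<dots> = (\<Sum>b\<in>UNIV. \<Sum>k\<in>UNIV. ?t r b * E b k * ?t s k)
      - \<tau> s / \<Omega> * (- \<zeta> r) - \<tau> r / \<Omega> * \<zeta> s + \<tau> r / \<Omega> * (\<tau> s / \<Omega>) * 0"
    unfolding bilinear_form_diff tEp pEt pEp ..
  finally show ?thesis
    by (simp add: mult_ac)
qed

context
  fixes U :: "(real^'n::finite) set" and G T :: "'n conn" and V Q :: "'n \<Rightarrow> 'n scal"
  assumes smooth_G: "\<And>k i j. smooth_ext U (G k i j)"
    and smooth_T: "\<And>k i j. smooth_ext U (T k i j)"
    and smooth_V: "\<And>i. smooth_ext U (V i)"
    and smooth_Q: "\<And>i. smooth_ext U (Q i)"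
begin

lemma ext_differentiable_Wf: "x \<in> U \<Longrightarrow> ext_differentiable (Wf V b) x p"
  unfolding Wf_def dp_eq_ext_deriv
  using smooth_ext_differentiable[OF smooth_V]
  by (intro ext_differentiable_sum ext_differentiable_mult ext_differentiable_coordinate) auto

lemma ext_differentiable_Uf: "x \<in> U \<Longrightarrow> ext_differentiable (Uf G V Q s) x p"
  unfolding Uf_def nab_up_def hor_def dp_eq_ext_deriv dx_eq_ext_deriv
  using smooth_ext_differentiable[OF smooth_V] smooth_ext_differentiable[OF smooth_G]
    smooth_ext_differentiable[OF smooth_Q]
  by (intro ext_differentiable_sum ext_differentiable_mult ext_differentiable_add ext_differentiable_coordinate) auto

lemma ext_differentiable_conn_shift: "x \<in> U \<Longrightarrow> ext_differentiable (conn_shift G T k i j) x p"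
  unfolding conn_shift_def
  using smooth_ext_differentiable(1)[OF smooth_G] smooth_ext_differentiable(1)[OF smooth_T]
  by (intro ext_differentiable_add)

lemma dp_conn_shift:
  "x \<in> U \<Longrightarrow> dp r (conn_shift G T k i j) x p = dp r (G k i j) x p + dp r (T k i j) x p"
  unfolding conn_shift_def dp_eq_ext_deriv
  using smooth_ext_differentiable(1)[OF smooth_G] smooth_ext_differentiable(1)[OF smooth_T]
  by (simp add: ext_deriv_add)

lemma dx_conn_shift:
  "x \<in> U \<Longrightarrow> dx r (conn_shift G T k i j) x p = dx r (G k i j) x p + dx r (T k i j) x p"
  unfolding conn_shift_def dx_eq_ext_deriv
  using smooth_ext_differentiable(1)[OF smooth_G] smooth_ext_differentiable(1)[OF smooth_T]
  by (simp add: ext_deriv_add)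

lemma dp_p_contract_conn_shift:
  assumes "x \<in> U"
  shows "dp b (p_contract (conn_shift G T) i j) x p = dp b (p_contract G i j) x p + dp b (p_contract T i j) x p"
proof -
  have "p_contract (conn_shift G T) i j = (\<lambda>x p. p_contract G i j x p + p_contract T i j x p)"
    by (simp add: fun_eq_iff p_contract_conn_shift)
  then show ?thesis
    using ext_differentiable_p_contract[OF smooth_ext_differentiable(1)[OF smooth_G assms]]
      ext_differentiable_p_contract[OF smooth_ext_differentiable(1)[OF smooth_T assms]]
    by (simp add: dp_eq_ext_deriv ext_deriv_add)
qed

lemma ext_deriv_Uf_shift:
  assumes "x \<in> U"
  shows "ext_deriv v (Uf (conn_shift G T) V (covector_shift T V Q) s) x p
    = ext_deriv v (Uf G V Q s) x p
      + (\<Sum>b\<in>UNIV. ext_deriv v (p_contract T s b) x p * Wf V b x p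
                     + p_contract T s b x p * ext_deriv v (Wf V b) x p)"
proof -
  have "Uf (conn_shift G T) V (covector_shift T V Q) s
      = (\<lambda>x p. Uf G V Q s x p + (\<Sum>b\<in>UNIV. p_contract T s b x p * Wf V b x p))"
    by (simp add: fun_eq_iff Uf_shift)
  then show ?thesis
    using ext_differentiable_Uf[OF assms] ext_differentiable_Wf[OF assms]
      ext_differentiable_p_contract[OF smooth_ext_differentiable(1)[OF smooth_T assms]]
    by (simp add: ext_deriv_add ext_deriv_sum ext_deriv_mult ext_differentiable_sum ext_differentiable_mult add.commute)
qed

lemma dp_Uf_shift:
  assumes "x \<in> U"
  shows "dp r (Uf (conn_shift G T) V (covector_shift T V Q) s) x p
    = dp r (Uf G V Q s) x p
      + (\<Sum>b\<in>UNIV. dp r (p_contract T s b) x p * Wf V b x p + p_contract T s b x p * Af V r b x p)"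
  using ext_deriv_Uf_shift[OF assms] by (simp add: dp_eq_ext_deriv Af_def)

lemma dx_Uf_shift:
  assumes "x \<in> U"
  shows "dx r (Uf (conn_shift G T) V (covector_shift T V Q) s) x p
    = dx r (Uf G V Q s) x p
      + (\<Sum>b\<in>UNIV. dx r (p_contract T s b) x p * Wf V b x p + p_contract T s b x p * dx r (Wf V b) x p)"
  using ext_deriv_Uf_shift[OF assms] by (simp add: dx_eq_ext_deriv)

lemma Bf_shift:
  assumes "x \<in> U" and T_sym: "\<And>k i j. T k i j = T k j i"
  shows "Bf (conn_shift G T) V (covector_shift T V Q) r s x p
    = Bf G V Q r s x p
      + (\<Sum>m\<in>UNIV. (Af V r m x p - Af V m r x p) * (\<Sum>b\<in>UNIV. Pf V b m x p * p_contract T b s x p))"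
proof -
  let ?t = "\<lambda>i j. p_contract T i j x p" and ?W = "\<lambda>b. Wf V b x p"
  let ?\<tau> = "\<Sum>b\<in>UNIV. ?t s b * ?W b"
  have "(\<Sum>m\<in>UNIV. \<Sum>k\<in>UNIV. ?W k * p$m * dp r (T m k s) x p)
      = (\<Sum>k\<in>UNIV. \<Sum>m\<in>UNIV. ?W k * p$m * dp r (T m s k) x p)"
    by (subst sum.swap) (simp add: T_sym[of _ _ s])
  then have Dt: "(\<Sum>m\<in>UNIV. \<Sum>k\<in>UNIV. ?W k * p$m * Dt (conn_shift G T) m r k s x p)
      = (\<Sum>m\<in>UNIV. \<Sum>k\<in>UNIV. ?W k * p$m * Dt G m r k s x p)
        - (\<Sum>b\<in>UNIV. p_contract (\<lambda>c i j. dp r (T c i j)) s b x p * ?W b)"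
    by (simp add: Dt_def dp_conn_shift[OF assms(1)] p_contract_def sum_simps algebra_simps)
  have P_t: "(\<Sum>b\<in>UNIV. Pf V b m x p * ?t b s) = ?t s m - p$m * ?\<tau> / Omega V x p" for m
  proof -
    have "Pf V b m x p * ?t b s = (if b = m then ?t s m else 0) - p$m * (?t s b * ?W b) / Omega V x p" for b
      using p_contract_sym[OF T_sym] by (simp add: Pf_def algebra_simps)
    then show ?thesis by (simp add: sum_subtractf sum_divide_distrib sum_distrib_left)
  qed
  show ?thesis
    unfolding Bf_def Dt P_t Uf_shift dp_Uf_shift[OF assms(1)] nab_up_Wf_shift
      dp_p_contract[OF smooth_ext_differentiable(1)[OF smooth_T assms(1)]]
    by (simp add: Af_def sum_simps algebra_simps diff_divide_distrib add_divide_distrib sum_divide_distrib)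
qed

lemma sum_p_Bf_shift:
  assumes "x \<in> U" and T_sym: "\<And>k i j. T k i j = T k j i"
  shows "(\<Sum>m\<in>UNIV. p$m * Bf (conn_shift G T) V (covector_shift T V Q) m s x p)
    = (\<Sum>m\<in>UNIV. p$m * Bf G V Q m s x p)
      + (\<Sum>b\<in>UNIV. p_contract T s b x p * (\<Sum>m\<in>UNIV. p$m * (Af V m b x p - Af V b m x p)))"
proof -
  define e where "e b = (\<Sum>m\<in>UNIV. p$m * (Af V m b x p - Af V b m x p))" for b
  have "(\<Sum>b\<in>UNIV. e b * p$b) = (\<Sum>b\<in>UNIV. \<Sum>m\<in>UNIV. p$b * p$m * (Af V m b x p - Af V b m x p))"
    unfolding e_def sum_distrib_left sum_distrib_right by (simp add: mult_ac)
  also have "\<dots> = 0"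
    by (rule quadratic_form_antisym)
  finally have e_p: "(\<Sum>b\<in>UNIV. e b * p$b) = 0" .
  have "e m * Pf V b m x p = (if m = b then e b else 0) - Wf V b x p / Omega V x p * (e m * p$m)" for b m
    by (simp add: Pf_def algebra_simps)
  then have e_P: "(\<Sum>m\<in>UNIV. e m * Pf V b m x p) = e b" for b
    using e_p by (simp add: sum_subtractf sum_divide_distrib[symmetric] sum_distrib_left[symmetric])
  have "(\<Sum>m\<in>UNIV. p$m * (\<Sum>m'\<in>UNIV. (Af V m m' x p - Af V m' m x p) * (\<Sum>b\<in>UNIV. Pf V b m' x p * p_contract T b s x p)))
      = (\<Sum>m\<in>UNIV. \<Sum>m'\<in>UNIV. \<Sum>b\<in>UNIV. p$m * (Af V m m' x p - Af V m' m x p) * Pf V b m' x p * p_contract T b s x p)"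
    by (simp add: sum_distrib_left mult_ac)
  also have "\<dots> = (\<Sum>m'\<in>UNIV. \<Sum>b\<in>UNIV. \<Sum>m\<in>UNIV. p$m * (Af V m m' x p - Af V m' m x p) * Pf V b m' x p * p_contract T b s x p)"
    by (rule sum_rotate3)
  also have "\<dots> = (\<Sum>m'\<in>UNIV. \<Sum>b\<in>UNIV. e m' * Pf V b m' x p * p_contract T b s x p)"
    by (simp add: e_def sum_distrib_right)
  also have "\<dots> = (\<Sum>b\<in>UNIV. (\<Sum>m'\<in>UNIV. e m' * Pf V b m' x p) * p_contract T b s x p)"
    by (subst sum.swap) (simp only: sum_distrib_right)
  also have "\<dots> = (\<Sum>b\<in>UNIV. p_contract T s b x p * e b)"
    by (simp add: e_P p_contract_sym[OF T_sym, where j = s] mult.commute)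
  finally show ?thesis
    unfolding Bf_shift[OF assms] by (simp add: e_def distrib_left sum.distrib)
qed

lemma Bf_eq:
  assumes "x \<in> U" and G_sym: "\<And>k i j. G k i j = G k j i"
  shows "Bf G V Q b s x p
    = dp b (Uf G V Q s) x p - (\<Sum>k\<in>UNIV. Wf V k x p * dp b (p_contract G s k) x p)
      - dx s (Wf V b) x p - (\<Sum>m\<in>UNIV. p_contract G s m x p * Af V m b x p)
      + Uf G V Q s x p * (\<Sum>m\<in>UNIV. p$m * (Af V m b x p - Af V b m x p)) / Omega V x p"
proof -
  have "(\<Sum>m\<in>UNIV. \<Sum>k\<in>UNIV. Wf V k x p * p$m * dp b (G m k s) x p)
      = (\<Sum>k\<in>UNIV. Wf V k x p * p_contract (\<lambda>c i j. dp b (G c i j)) s k x p)"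
    by (subst sum.swap) (simp add: p_contract_def sum_distrib_left G_sym[of _ _ s] mult_ac)
  then show ?thesis
    unfolding Bf_def Dt_def nab_up_def hor_def dp_p_contract[OF smooth_ext_differentiable(1)[OF smooth_G assms(1)]]
    by (simp add: p_contract_def Af_def G_sym[of b s] sum_simps algebra_simps sum_divide_distrib diff_divide_distrib)
qed

lemma curv_conn_shift:
  assumes "x \<in> U"
  shows "curv (conn_shift G T) q k r s x p
    = curv G q k r s x p + curv_shift_term G T q k r s x p - curv_shift_term G T q k s r x p"
  unfolding curv_def curv_shift_term_def dx_conn_shift[OF assms] dp_conn_shift[OF assms]
  by (simp add: conn_shift_def p_contract_def sum_simps algebra_simps)

lemma p_contract_curv_shift_term:
  assumes "x \<in> U" and G_sym: "\<And>k i j. G k i j = G k j i" and T_sym: "\<And>k i j. T k i j = T k j i"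
  shows "(\<Sum>q\<in>UNIV. p$q * curv_shift_term G T q k r s x p)
    = hor G (p_contract T s k) r x p + (\<Sum>b\<in>UNIV. p_contract T r b x p * dp b (p_contract (conn_shift G T) s k) x p)"
proof -
  note T = smooth_ext_differentiable(1)[OF smooth_T assms(1)]
  note G'= ext_differentiable_conn_shift[OF assms(1)]
  have dpT: "dp b (p_contract T i j) x p = T b i j x p + p_contract (\<lambda>c i j. dp b (T c i j)) i j x p" for b i j
    using T by (rule dp_p_contract)
  have dxT: "dx b (p_contract T i j) x p = p_contract (\<lambda>c i j. dx b (T c i j)) i j x p" for b i j
    using T by (rule dx_p_contract)
  have dpG': "dp b (p_contract (conn_shift G T) i j) x p
      = conn_shift G T b i j x p + p_contract (\<lambda>c i j. dp b (conn_shift G T c i j)) i j x p" for b i j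
    using G' by (rule dp_p_contract)
  have contract: "(\<Sum>q\<in>UNIV. p$q * (F q i j x p * Y)) = p_contract F i j x p * Y" for F :: "'n conn" and i j Y
    unfolding p_contract_def sum_distrib_right by (simp add: mult_ac)
  have contract_dp: "(\<Sum>q\<in>UNIV. p$q * (Y * dp m (F q i j) x p)) = Y * p_contract (\<lambda>c i j. dp m (F c i j)) i j x p"
    for F :: "'n conn" and m i j Y
    unfolding p_contract_def sum_distrib_left by (simp add: mult_ac)
  show ?thesis
    unfolding curv_shift_term_def hor_eq dpT dxT dpG'
    by (simp only: distrib_left sum.distrib sum_mult_sum_swap)
      (simp add: p_contract_def[of "\<lambda>c i j. dx r (T c i j)"] contract[of G] contract[of T] contract_dp
        p_contract_sym[OF G_sym, where j = r] p_contract_sym[OF T_sym, where j = r] algebra_simps)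
qed

lemma curv_Wp_shift:
  assumes "x \<in> U" and "\<And>k i j. G k i j = G k j i" and "\<And>k i j. T k i j = T k j i"
  shows "curv_Wp (conn_shift G T) V r s x p
    = curv_Wp G V r s x p + curv_shift_Wp G T V r s x p - curv_shift_Wp G T V s r x p"
proof -
  have "(\<Sum>k\<in>UNIV. \<Sum>q\<in>UNIV. curv_shift_term G T q k r s x p * Wf V k x p * p$q) = curv_shift_Wp G T V r s x p"
    for r s
    unfolding curv_shift_Wp_def p_contract_curv_shift_term[OF assms, symmetric]
    by (simp add: sum_distrib_left mult_ac)
  then show ?thesis
    unfolding curv_Wp_def curv_conn_shift[OF assms(1)] by (simp add: sum_simps algebra_simps)
qed

(* The last three summands are symmetric in r and s, so they cancel in nab_down_Uf_shift_antisym. *)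
lemma nab_down_Uf_shift:
  assumes "x \<in> U" and G_sym: "\<And>k i j. G k i j = G k j i" and T_sym: "\<And>k i j. T k i j = T k j i"
  shows "nab_down (conn_shift G T) (Uf (conn_shift G T) V (covector_shift T V Q)) s r x p
    - nab_down G (Uf G V Q) s r x p
    = curv_shift_Wp G T V r s x p
      + (\<Sum>b\<in>UNIV. p_contract T r b x p * Bf G V Q b s x p)
      - Uf G V Q s x p * (\<Sum>b\<in>UNIV. p_contract T r b x p * (\<Sum>m\<in>UNIV. p$m * (Af V m b x p - Af V b m x p))) / Omega V x p
      + (\<Sum>b\<in>UNIV. \<Sum>k\<in>UNIV. p_contract T r b x p * p_contract T s k x p * Af V b k x p)
      + (\<Sum>b\<in>UNIV. p_contract T s b x p * dx r (Wf V b) x p + p_contract T r b x p * dx s (Wf V b) x p)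
      + (\<Sum>b\<in>UNIV. \<Sum>k\<in>UNIV. p_contract G r b x p * p_contract T s k x p * Af V b k x p
                                + p_contract T r b x p * p_contract G s k x p * Af V k b x p)
      - (\<Sum>b\<in>UNIV. T b r s x p * Uf (conn_shift G T) V (covector_shift T V Q) b x p
                     + G b r s x p * (\<Sum>k\<in>UNIV. p_contract T b k x p * Wf V k x p))"
proof -
  have "curv_shift_Wp G T V r s x p
      = (\<Sum>k\<in>UNIV. Wf V k x p * dx r (p_contract T s k) x p)
        + (\<Sum>k\<in>UNIV. \<Sum>b\<in>UNIV. Wf V k x p * (p_contract G r b x p * dp b (p_contract T s k) x p
                            + p_contract T r b x p * dp b (p_contract (conn_shift G T) s k) x p))"
    by (simp add: curv_shift_Wp_def hor_eq sum_distrib_left distrib_left sum.distrib)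
  also have "\<dots> = (\<Sum>k\<in>UNIV. Wf V k x p * dx r (p_contract T s k) x p)
        + (\<Sum>b\<in>UNIV. \<Sum>k\<in>UNIV. Wf V k x p * (p_contract G r b x p * dp b (p_contract T s k) x p
                            + p_contract T r b x p * dp b (p_contract (conn_shift G T) s k) x p))"
    by (subst sum.swap) (rule refl)
  finally have curv_shift_Wp: "curv_shift_Wp G T V r s x p = \<dots>" .
  show ?thesis
    unfolding nab_down_def hor_eq dx_Uf_shift[OF assms(1)] dp_Uf_shift[OF assms(1)] Uf_shift
      curv_shift_Wp Bf_eq[OF assms(1,2)] dp_p_contract_conn_shift[OF assms(1)] p_contract_conn_shift
    by (simp add: conn_shift_def sum_simps algebra_simps sum_divide_distrib diff_divide_distrib Af_def)
qed

lemma nab_down_Uf_shift_antisym: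
  assumes "x \<in> U" and G_sym: "\<And>k i j. G k i j = G k j i" and T_sym: "\<And>k i j. T k i j = T k j i"
  shows "nab_down (conn_shift G T) (Uf (conn_shift G T) V (covector_shift T V Q)) s r x p
      - nab_down (conn_shift G T) (Uf (conn_shift G T) V (covector_shift T V Q)) r s x p
    = nab_down G (Uf G V Q) s r x p - nab_down G (Uf G V Q) r s x p
      + curv_shift_Wp G T V r s x p - curv_shift_Wp G T V s r x p
      + (\<Sum>b\<in>UNIV. p_contract T r b x p * Bf G V Q b s x p)
      - (\<Sum>b\<in>UNIV. p_contract T s b x p * Bf G V Q b r x p)
      - Uf G V Q s x p * (\<Sum>b\<in>UNIV. p_contract T r b x p * (\<Sum>m\<in>UNIV. p$m * (Af V m b x p - Af V b m x p))) / Omega V x p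
      + Uf G V Q r x p * (\<Sum>b\<in>UNIV. p_contract T s b x p * (\<Sum>m\<in>UNIV. p$m * (Af V m b x p - Af V b m x p))) / Omega V x p
      + (\<Sum>b\<in>UNIV. \<Sum>k\<in>UNIV. p_contract T r b x p * p_contract T s k x p * (Af V b k x p - Af V k b x p))"
proof -
  note expand_rs = nab_down_Uf_shift[OF assms, of s r p]
  note expand_sr = nab_down_Uf_shift[OF assms, of r s p, unfolded T_sym[of _ s r] G_sym[of _ s r]]
  have dxW_sym: "(\<Sum>b\<in>UNIV. p_contract T r b x p * dx s (Wf V b) x p + p_contract T s b x p * dx r (Wf V b) x p)
      = (\<Sum>b\<in>UNIV. p_contract T s b x p * dx r (Wf V b) x p + p_contract T r b x p * dx s (Wf V b) x p)"
    by (simp add: add.commute)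
  have GT_sym: "(\<Sum>b\<in>UNIV. \<Sum>k\<in>UNIV. p_contract G s b x p * p_contract T r k x p * Af V b k x p
                                + p_contract T s b x p * p_contract G r k x p * Af V k b x p)
      = (\<Sum>b\<in>UNIV. \<Sum>k\<in>UNIV. p_contract G r b x p * p_contract T s k x p * Af V b k x p
                                + p_contract T r b x p * p_contract G s k x p * Af V k b x p)"
    by (subst sum.swap) (simp add: algebra_simps)
  have TT_swap: "(\<Sum>b\<in>UNIV. \<Sum>k\<in>UNIV. p_contract T s b x p * p_contract T r k x p * Af V b k x p)
      = (\<Sum>b\<in>UNIV. \<Sum>k\<in>UNIV. p_contract T r b x p * p_contract T s k x p * Af V k b x p)"
    by (subst sum.swap) (simp add: mult_ac)
  have TT_split: "(\<Sum>b\<in>UNIV. \<Sum>k\<in>UNIV. p_contract T r b x p * p_contract T s k x p * (Af V b k x p - Af V k b x p))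
      = (\<Sum>b\<in>UNIV. \<Sum>k\<in>UNIV. p_contract T r b x p * p_contract T s k x p * Af V b k x p)
        - (\<Sum>b\<in>UNIV. \<Sum>k\<in>UNIV. p_contract T r b x p * p_contract T s k x p * Af V k b x p)"
    by (simp add: right_diff_distrib sum_subtractf)
  show ?thesis
    using expand_rs expand_sr dxW_sym GT_sym TT_swap TT_split by linarith
qed

lemma Cf_shift_antisym:
  assumes "x \<in> U" and G_sym: "\<And>k i j. G k i j = G k j i" and T_sym: "\<And>k i j. T k i j = T k j i"
  shows "Cf (conn_shift G T) V (covector_shift T V Q) r s x p - Cf (conn_shift G T) V (covector_shift T V Q) s r x p
    = Cf G V Q r s x p - Cf G V Q s r x p
      + (\<Sum>b\<in>UNIV. (\<Sum>c\<in>UNIV. p_contract T r c x p * Pf V c b x p) * Bf G V Q b s x p)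
      - (\<Sum>b\<in>UNIV. (\<Sum>c\<in>UNIV. p_contract T s c x p * Pf V c b x p) * Bf G V Q b r x p)
      + (\<Sum>b\<in>UNIV. \<Sum>k\<in>UNIV. (\<Sum>c\<in>UNIV. p_contract T r c x p * Pf V c b x p)
            * (Af V b k x p - Af V k b x p) * (\<Sum>c\<in>UNIV. p_contract T s c x p * Pf V c k x p))"
proof -
  define \<Omega> where "\<Omega> = Omega V x p"
  define \<tau> where "\<tau> r = (\<Sum>b\<in>UNIV. p_contract T r b x p * Wf V b x p)" for r
  define \<zeta> where "\<zeta> r = (\<Sum>b\<in>UNIV. p_contract T r b x p * (\<Sum>m\<in>UNIV. p$m * (Af V m b x p - Af V b m x p)))" for r
  have tPB: "(\<Sum>b\<in>UNIV. (\<Sum>c\<in>UNIV. p_contract T r c x p * Pf V c b x p) * Bf G V Q b s x p)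
      = (\<Sum>b\<in>UNIV. p_contract T r b x p * Bf G V Q b s x p) - \<tau> r * (\<Sum>m\<in>UNIV. p$m * Bf G V Q m s x p) / \<Omega>" for r s
    unfolding sum_p_contract_Pf \<tau>_def[symmetric] \<Omega>_def[symmetric] left_diff_distrib sum_subtractf
    by (simp add: sum_distrib_left sum_divide_distrib mult_ac)
  show ?thesis
    unfolding Cf_antisym[of "conn_shift G T"] Cf_antisym[of G] nab_down_Uf_shift_antisym[OF assms] Uf_shift
      sum_p_Bf_shift[OF assms(1,3)] curv_Wp_shift[OF assms] tPB Af_skew_form_p_contract_Pf
      \<Omega>_def[symmetric] \<tau>_def[symmetric] \<zeta>_def[symmetric]
    unfolding divide_inverse by algebra
qed

lemma normality_eqs_shift:
  assumes "x \<in> U" and G_sym: "\<And>k i j. G k i j = G k j i" and T_sym: "\<And>k i j. T k i j = T k j i"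
  shows "normality_eqs G V Q x p \<longleftrightarrow> normality_eqs (conn_shift G T) V (covector_shift T V Q) x p"
proof -
  define P where "P = (\<chi> i j. Pf V i j x p)"
  define A where "A = (\<chi> i j. Af V i j x p)"
  define t where "t = (\<chi> i j. p_contract T i j x p)"
  define B where "B = (\<chi> i j. Bf G V Q i j x p)"
  define C where "C = (\<chi> i j. Cf G V Q i j x p)"
  define B' where "B' = (\<chi> i j. Bf (conn_shift G T) V (covector_shift T V Q) i j x p)"
  define C' where "C' = (\<chi> i j. Cf (conn_shift G T) V (covector_shift T V Q) i j x p)"
  have t_sym: "transpose t = t"
    using p_contract_sym[OF T_sym] by (simp add: t_def transpose_def vec_eq_iff)
  have "B' = B + (A - transpose A) ** transpose P ** t"
  proof -
    have "(\<Sum>m\<in>UNIV. (Af V r m x p - Af V m r x p) * (\<Sum>b\<in>UNIV. Pf V b m x p * p_contract T b s x p))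
        = (\<Sum>b\<in>UNIV. (\<Sum>m\<in>UNIV. (Af V r m x p - Af V m r x p) * Pf V b m x p) * p_contract T b s x p)" for r s
      unfolding sum_distrib_left sum_distrib_right mult.assoc by (rule sum.swap)
    then show ?thesis
      by (simp add: vec_eq_iff B'_def B_def A_def P_def t_def Bf_shift[OF assms(1,3)]
          matrix_matrix_mult_def transpose_def)
  qed
  moreover have "C' - transpose C' = C - transpose C + t ** P ** B - transpose (t ** P ** B)
      + t ** P ** (A - transpose A) ** transpose (t ** P)"
  proof -
    have "(\<Sum>b\<in>UNIV. \<Sum>k\<in>UNIV. X b * E b k * Y k) = (\<Sum>k\<in>UNIV. (\<Sum>b\<in>UNIV. X b * E b k) * Y k)"
      for X Y :: "'n \<Rightarrow> real" and E
      by (subst sum.swap) (simp add: sum_distrib_right)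
    then show ?thesis
      by (simp add: vec_eq_iff C'_def C_def A_def B_def P_def t_def Cf_shift_antisym[OF assms]
          matrix_matrix_mult_def transpose_def)
  qed
  ultimately show ?thesis
    using normal_matrix_eqs_shift[OF t_sym] 
    unfolding normality_eqs_iff_normal_matrix_eqs P_def[symmetric] A_def[symmetric] B_def[symmetric]
      C_def[symmetric] B'_def[symmetric] C'_def[symmetric]
    by blast
qed

end

theorem theorem13p2:
  fixes U :: "(real^'n::finite) set"
    and G T :: "'n conn"
    and V Q :: "'n \<Rightarrow> 'n scal"
  assumes "open U"
    and "CARD('n) \<ge> 2"
    and "\<And>k i j. smooth_ext U (G k i j)"
    and "\<And>k i j. G k i j = G k j i"
    and "\<And>i. smooth_ext U (V i)"
    and "regular_field U V"
    and "\<And>i. smooth_ext U (Q i)"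
    and "\<And>k i j. smooth_ext U (T k i j)"
    and "\<And>k i j. T k i j = T k j i"
  shows "(\<forall>x\<in>U. \<forall>p. p \<noteq> 0 \<longrightarrow> normality_eqs G V Q x p)
     \<longleftrightarrow> (\<forall>x\<in>U. \<forall>p. p \<noteq> 0 \<longrightarrow>
            normality_eqs (\<lambda>k i j x p. G k i j x p + T k i j x p) V
              (\<lambda>i x p. Q i x p - (\<Sum>k\<in>UNIV. \<Sum>s\<in>UNIV. T k i s x p * p$k * V s x p)) x p)"
  using normality_eqs_shift[where U = U and G = G and T = T and V = V and Q = Q, OF assms(3,8,5,7) _ assms(4,9)]
  unfolding conn_shift_def covector_shift_def by blast

end
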